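(* Let $G=(G^0,G^1,r,s)$ be a topological graph in which $G^0$ and $G^1$ are compact Hausdorff spaces and $r,s:G^1\to G^0$ are surjective local homeomorphisms. For $m,n\in\mathbb{N}$ let $G^1_{m,n}:=\{e\in G^1:|r(e)G^1|=m\text{ and }|G^1s(e)|=n\}$. Then the sets $G^1_{m,n}$ are compact open, as are $s(G^1_{m,n})$ and $r(G^1_{m,n})$.
   Context: For $v\in G^0$, $G^1v:=s^{-1}(v)$ and $vG^1:=r^{-1}(v)$; $|\cdot|$ denotes cardinality. *)

theory Defs
  imports "HOL-Analysis.Analysis"
begin

definition local_homeomorphism_map :: "'a topology \<Rightarrow> 'b topology \<Rightarrow> ('a \<Rightarrow> 'b) \<Rightarrow> bool" where
  "local_homeomorphism_map X Y f \<longleftrightarrow>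
     f \<in> topspace X \<rightarrow> topspace Y \<and>
     (\<forall>x\<in>topspace X. \<exists>U. openin X U \<and> x \<in> U \<and> openin Y (f ` U) \<and>
        homeomorphic_map (subtopology X U) (subtopology Y (f ` U)) f)"

definition range_fibre :: "'e topology \<Rightarrow> ('e \<Rightarrow> 'v) \<Rightarrow> 'v \<Rightarrow> 'e set" where
  "range_fibre G1 r v = {f \<in> topspace G1. r f = v}"

definition source_fibre :: "'e topology \<Rightarrow> ('e \<Rightarrow> 'v) \<Rightarrow> 'v \<Rightarrow> 'e set" where
  "source_fibre G1 s v = {f \<in> topspace G1. s f = v}"

definition edges_mn :: "'e topology \<Rightarrow> ('e \<Rightarrow> 'v) \<Rightarrow> ('e \<Rightarrow> 'v) \<Rightarrow> nat \<Rightarrow> nat \<Rightarrow> 'e set" where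
  "edges_mn G1 r s m n =
     {e \<in> topspace G1.
        finite (range_fibre G1 r (r e)) \<and> card (range_fibre G1 r (r e)) = m \<and>
        finite (source_fibre G1 s (s e)) \<and> card (source_fibre G1 s (s e)) = n}"

end

theory Submission
  imports Defs
begin

text \<open>A local homeomorphism \<open>f\<close> from a compact Hausdorff space to a Hausdorff space has
finite fibres (they are compact and discrete), and the fibre cardinality is locally constant:
separate the points \<open>p\<close> of the fibre over \<open>y\<close> by disjoint open sets \<open>W p\<close> on which \<open>f\<close> is
injective.\<close>

lemma local_homeomorphism_map_imp_locally_injective:
  assumes "local_homeomorphism_map X Y f" "x \<in> topspace X"
  shows "\<exists>U. openin X U \<and> x \<in> U \<and> inj_on f U"
proof -
  obtain U where "openin X U" "x \<in> U"
    "homeomorphic_map (subtopology X U) (subtopology Y (f ` U)) f"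
    using assms unfolding local_homeomorphism_map_def by blast
  then show ?thesis
    using homeomorphic_imp_injective_map openin_subset by (metis topspace_subtopology_subset)
qed

lemma local_homeomorphism_map_imp_continuous_map:
  assumes "local_homeomorphism_map X Y f"
  shows "continuous_map X Y f"
proof -
  obtain U where U: "\<And>x. x \<in> topspace X \<Longrightarrow> openin X (U x) \<and> x \<in> U x \<and>
      homeomorphic_map (subtopology X (U x)) (subtopology Y (f ` U x)) f"
    using assms unfolding local_homeomorphism_map_def by metis
  show ?thesis
  proof (rule pasting_lemma[where I = "topspace X" and T = U and f = "\<lambda>_. f"])
    show "continuous_map (subtopology X (U x)) Y f" if "x \<in> topspace X" for x
      using U[OF that] homeomorphic_imp_continuous_map continuous_map_in_subtopology by blast
    show "\<exists>j. j \<in> topspace X \<and> x \<in> U j \<and> f x = f x" if "x \<in> topspace X" for x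
      using U[OF that] that by blast
  qed (use U in blast)+
qed

lemma local_homeomorphism_map_imp_open_map:
  assumes "local_homeomorphism_map X Y f"
  shows "open_map X Y f"
  unfolding open_map_def
proof (intro allI impI)
  fix W assume W: "openin X W"
  show "openin Y (f ` W)"
  proof (subst openin_subopen, intro ballI)
    fix y assume "y \<in> f ` W"
    then obtain x where x: "x \<in> W" "y = f x" by auto
    then obtain U where U: "openin X U" "x \<in> U" "openin Y (f ` U)"
      "homeomorphic_map (subtopology X U) (subtopology Y (f ` U)) f"
      using assms W openin_subset unfolding local_homeomorphism_map_def by blast
    have "open_map (subtopology X U) Y f"
      using U(3,4) homeomorphic_imp_open_map open_map_from_open_subtopology by blast
    moreover have "openin (subtopology X U) (U \<inter> W)"
      using U(1) W openin_open_subtopology by blast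
    ultimately have "openin Y (f ` (U \<inter> W))"
      unfolding open_map_def by blast
    then show "\<exists>T. openin Y T \<and> y \<in> T \<and> T \<subseteq> f ` W"
      using x U(2) by blast
  qed
qed

definition fibre :: "'a topology \<Rightarrow> ('a \<Rightarrow> 'b) \<Rightarrow> 'b \<Rightarrow> 'a set" where
  "fibre X f y = {x \<in> topspace X. f x = y}"

lemma finite_fibre_locally_injective:
  assumes "compact_space X" "t1_space Y" "continuous_map X Y f"
    and locally_injective: "\<And>x. x \<in> topspace X \<Longrightarrow> \<exists>U. openin X U \<and> x \<in> U \<and> inj_on f U"
  shows "finite (fibre X f y)"
proof (cases "y \<in> topspace Y")
  case False
  then have "fibre X f y = {}"
    using assms(3) continuous_map_image_subset_topspace unfolding fibre_def by blast
  then show ?thesis by simp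
next
  case True
  let ?F = "fibre X f y"
  have "closedin X ?F"
    using closedin_continuous_map_preimage[OF assms(3) closedin_t1_singleton[OF assms(2) True]]
    unfolding fibre_def by simp
  then have "compact_space (subtopology X ?F)"
    using assms(1) closedin_compact_space compact_space_subtopology by blast
  moreover have "x \<notin> X derived_set_of ?F" if x: "x \<in> ?F" for x
  proof -
    obtain U where U: "openin X U" "x \<in> U" "inj_on f U"
      using locally_injective x unfolding fibre_def by blast
    have "x' = x" if "x' \<in> ?F" "x' \<in> U" for x'
      using inj_onD[OF U(3)] U(2) x that unfolding fibre_def by auto
    with U show ?thesis
      unfolding in_derived_set_of by blast
  qed
  then have "subtopology X ?F = discrete_topology ?F"
    unfolding subtopology_eq_discrete_topology_eq fibre_def by blast
  ultimately show ?thesis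
    using compact_space_discrete_topology by metis
qed

lemma finite_fibre_local_homeomorphism_map:
  assumes "compact_space X" "t1_space Y" "local_homeomorphism_map X Y f"
  shows "finite (fibre X f y)"
  using finite_fibre_locally_injective[OF assms(1,2) local_homeomorphism_map_imp_continuous_map]
    local_homeomorphism_map_imp_locally_injective assms(3) by blast

lemma Hausdorff_space_separate_finite:
  assumes "Hausdorff_space X" "finite F" "F \<subseteq> topspace X"
  obtains W where "\<And>p. p \<in> F \<Longrightarrow> openin X (W p) \<and> p \<in> W p" "disjoint_family_on W F"
proof -
  obtain S T where ST: "\<And>p q. p \<in> F \<Longrightarrow> q \<in> F \<Longrightarrow> p \<noteq> q \<Longrightarrow>
      openin X (S p q) \<and> openin X (T p q) \<and> p \<in> S p q \<and> q \<in> T p q \<and> disjnt (S p q) (T p q)"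
    using assms(1,3) unfolding Hausdorff_space_def by (metis subsetD)
  define W where "W p = topspace X \<inter> \<Inter>((\<lambda>q. S p q \<inter> T q p) ` (F - {p}))" for p
  show thesis
  proof
    show "openin X (W p) \<and> p \<in> W p" if "p \<in> F" for p
    proof
      show "openin X (W p)"
        unfolding W_def using assms(2) that ST by (intro openin_Int_Inter) auto
      show "p \<in> W p"
        unfolding W_def using assms(3) that ST by auto
    qed
    show "disjoint_family_on W F"
      unfolding disjoint_family_on_def
    proof (intro ballI impI)
      fix p q assume pq: "p \<in> F" "q \<in> F" "p \<noteq> q"
      have "W p \<subseteq> S p q" "W q \<subseteq> T p q"
        unfolding W_def using pq by auto
      then show "W p \<inter> W q = {}"
        using ST[OF pq] by (auto simp: disjnt_def)
    qed
  qed
qed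

lemma local_homeomorphism_map_disjoint_sheets:
  assumes "Hausdorff_space X" "local_homeomorphism_map X Y f" "finite F" "F \<subseteq> topspace X"
  obtains W where "\<And>p. p \<in> F \<Longrightarrow> openin X (W p) \<and> p \<in> W p \<and> inj_on f (W p)"
    "disjoint_family_on W F"
proof -
  have "\<forall>p\<in>F. \<exists>U. openin X U \<and> p \<in> U \<and> inj_on f U"
    using local_homeomorphism_map_imp_locally_injective[OF assms(2)] assms(4) by blast
  then obtain U where U: "\<And>p. p \<in> F \<Longrightarrow> openin X (U p) \<and> p \<in> U p \<and> inj_on f (U p)"
    by metis
  obtain S where S: "\<And>p. p \<in> F \<Longrightarrow> openin X (S p) \<and> p \<in> S p" "disjoint_family_on S F"
    using Hausdorff_space_separate_finite[OF assms(1,3,4)] by blast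
  show thesis
  proof
    show "openin X (U p \<inter> S p) \<and> p \<in> U p \<inter> S p \<and> inj_on f (U p \<inter> S p)" if "p \<in> F" for p
      using U[OF that] S(1)[OF that] inj_on_subset by blast
    show "disjoint_family_on (\<lambda>p. U p \<inter> S p) F"
      using S(2) unfolding disjoint_family_on_def by blast
  qed
qed

lemma card_fibre_eq_card_sheets:
  assumes sheets: "\<And>p. p \<in> P \<Longrightarrow> W p \<subseteq> topspace X \<and> inj_on f (W p) \<and> z \<in> f ` W p"
    and "disjoint_family_on W P" "fibre X f z \<subseteq> \<Union>(W ` P)"
  shows "card (fibre X f z) = card P"
proof -
  have "\<forall>p\<in>P. \<exists>x. x \<in> W p \<and> f x = z"
    using sheets by blast
  then obtain g where g: "\<And>p. p \<in> P \<Longrightarrow> g p \<in> W p \<and> f (g p) = z"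
    by metis
  have "fibre X f z = g ` P"
  proof
    show "g ` P \<subseteq> fibre X f z"
      using g sheets unfolding fibre_def by blast
    show "fibre X f z \<subseteq> g ` P"
    proof
      fix x assume x: "x \<in> fibre X f z"
      then obtain p where p: "p \<in> P" "x \<in> W p"
        using assms(3) by blast
      moreover have "f x = f (g p)"
        using g[OF p(1)] x unfolding fibre_def by simp
      ultimately have "x = g p"
        using g[OF p(1)] sheets[OF p(1)] inj_onD by metis
      with p show "x \<in> g ` P" by blast
    qed
  qed
  moreover have "inj_on g P"
  proof (rule inj_onI)
    fix p q assume pq: "p \<in> P" "q \<in> P" "g p = g q"
    then have "g p \<in> W p \<inter> W q"
      using g[OF pq(1)] g[OF pq(2)] by simp
    with pq assms(2) show "p = q"
      unfolding disjoint_family_on_def by blast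
  qed
  ultimately show ?thesis
    by (simp add: card_image)
qed

lemma continuous_map_discrete_topology_locally_constant:
  assumes "\<And>x. x \<in> topspace X \<Longrightarrow> \<exists>U. openin X U \<and> x \<in> U \<and> (\<forall>x'\<in>U. \<phi> x' = \<phi> x)"
  shows "continuous_map X (discrete_topology UNIV) \<phi>"
  unfolding continuous_map_def
proof (intro conjI allI impI)
  fix C :: "'b set"
  show "openin X {x \<in> topspace X. \<phi> x \<in> C}"
  proof (subst openin_subopen, intro ballI)
    fix x assume x: "x \<in> {x \<in> topspace X. \<phi> x \<in> C}"
    then obtain U where "openin X U" "x \<in> U" "\<forall>x'\<in>U. \<phi> x' = \<phi> x"
      using assms by blast
    with x show "\<exists>T. openin X T \<and> x \<in> T \<and> T \<subseteq> {x \<in> topspace X. \<phi> x \<in> C}"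
      using openin_subset by (intro exI[of _ U]) fastforce
  qed
qed auto

lemma continuous_map_card_fibre:
  assumes X: "compact_space X" "Hausdorff_space X" and Y: "Hausdorff_space Y"
    and f: "local_homeomorphism_map X Y f"
  shows "continuous_map Y (discrete_topology UNIV) (\<lambda>y. card (fibre X f y))"
proof (rule continuous_map_discrete_topology_locally_constant)
  fix y assume y: "y \<in> topspace Y"
  let ?F = "fibre X f y"
  have cont: "continuous_map X Y f"
    using f local_homeomorphism_map_imp_continuous_map by blast
  have finite: "finite ?F"
    using finite_fibre_local_homeomorphism_map[OF X(1) Hausdorff_imp_t1_space[OF Y] f] .
  obtain W where W: "\<And>p. p \<in> ?F \<Longrightarrow> openin X (W p) \<and> p \<in> W p \<and> inj_on f (W p)"
    and disjoint: "disjoint_family_on W ?F"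
    using local_homeomorphism_map_disjoint_sheets[OF X(2) f finite] unfolding fibre_def by blast
  define C where "C = f ` (topspace X - \<Union>(W ` ?F))"
  define V where "V = (topspace Y - C) \<inter> \<Inter>((\<lambda>p. f ` W p) ` ?F)"
  have "closedin X (topspace X - \<Union>(W ` ?F))"
    using W by (intro closedin_diff) auto
  then have "closedin Y C"
    using continuous_imp_closed_map_gen[OF X(1) Hausdorff_imp_kc_space[OF Y] cont]
    unfolding closed_map_def C_def by blast
  moreover have "openin Y (f ` W p)" if "p \<in> ?F" for p
    using local_homeomorphism_map_imp_open_map[OF f] W[OF that] unfolding open_map_def by blast
  ultimately have "openin Y V"
    unfolding V_def using finite by (intro openin_Int_Inter openin_diff) auto
  moreover have "y \<in> V"
  proof -
    have "y \<notin> C"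
      using W unfolding C_def fibre_def by blast
    moreover have "y \<in> f ` W p" if "p \<in> ?F" for p
      using W[OF that] that unfolding fibre_def by force
    ultimately show ?thesis
      unfolding V_def using y by blast
  qed
  moreover have "card (fibre X f z) = card ?F" if z: "z \<in> V" for z
  proof (rule card_fibre_eq_card_sheets)
    show "W p \<subseteq> topspace X \<and> inj_on f (W p) \<and> z \<in> f ` W p" if p: "p \<in> ?F" for p
      using W[OF p] openin_subset z p unfolding V_def by blast
    show "disjoint_family_on W ?F"
      by (rule disjoint)
    show "fibre X f z \<subseteq> \<Union>(W ` ?F)"
      using z unfolding V_def C_def fibre_def by blast
  qed
  ultimately show "\<exists>V. openin Y V \<and> y \<in> V \<and> (\<forall>z\<in>V. card (fibre X f z) = card (fibre X f y))"
    by blast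
qed

lemma range_fibre_eq_fibre: "range_fibre = fibre"
  and source_fibre_eq_fibre: "source_fibre = fibre"
  by (intro ext; simp add: range_fibre_def source_fibre_def fibre_def)+

theorem mainTheorem10:
  fixes G0 :: "'v topology" and G1 :: "'e topology" and r s :: "'e \<Rightarrow> 'v"
  assumes "compact_space G0" "Hausdorff_space G0"
    and "compact_space G1" "Hausdorff_space G1"
    and "local_homeomorphism_map G1 G0 r" "r ` topspace G1 = topspace G0"
    and "local_homeomorphism_map G1 G0 s" "s ` topspace G1 = topspace G0"
  shows "\<forall>m n.
     compactin G1 (edges_mn G1 r s m n) \<and> openin G1 (edges_mn G1 r s m n) \<and>
     compactin G0 (s ` edges_mn G1 r s m n) \<and> openin G0 (s ` edges_mn G1 r s m n) \<and>
     compactin G0 (r ` edges_mn G1 r s m n) \<and> openin G0 (r ` edges_mn G1 r s m n)"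
proof (intro allI)
  fix m n
  let ?E = "edges_mn G1 r s m n"
  have r: "continuous_map G1 G0 r" and s: "continuous_map G1 G0 s"
    using assms(5,7) local_homeomorphism_map_imp_continuous_map by blast+
  have "finite (fibre G1 r v)" "finite (fibre G1 s v)" for v
    using finite_fibre_local_homeomorphism_map[OF assms(3) Hausdorff_imp_t1_space[OF assms(2)]]
      assms(5,7) by blast+
  then have E: "?E = {e \<in> topspace G1. card (fibre G1 r (r e)) \<in> {m}} \<inter>
      {e \<in> topspace G1. card (fibre G1 s (s e)) \<in> {n}}"
    unfolding edges_mn_def range_fibre_eq_fibre source_fibre_eq_fibre by auto
  have card_r: "continuous_map G1 (discrete_topology UNIV) (\<lambda>e. card (fibre G1 r (r e)))"
    and card_s: "continuous_map G1 (discrete_topology UNIV) (\<lambda>e. card (fibre G1 s (s e)))"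
    using continuous_map_compose[OF r continuous_map_card_fibre[OF assms(3,4,2,5)]]
      continuous_map_compose[OF s continuous_map_card_fibre[OF assms(3,4,2,7)]]
    by (simp_all add: o_def)
  have "openin G1 ?E"
    unfolding E using card_r card_s by (intro openin_Int openin_continuous_map_preimage) auto
  moreover have "compactin G1 ?E"
    unfolding E using card_r card_s assms(3)
    by (intro closedin_compact_space closedin_Int closedin_continuous_map_preimage) auto
  ultimately show "compactin G1 ?E \<and> openin G1 ?E \<and> compactin G0 (s ` ?E) \<and> openin G0 (s ` ?E) \<and>
      compactin G0 (r ` ?E) \<and> openin G0 (r ` ?E)"
    using image_compactin r s assms(5,7) local_homeomorphism_map_imp_open_map
    unfolding open_map_def by blast
qed

end
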